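(* Fix $L\neq0$. Consider the system, in time $\tau$, $$\xi''=2\xi^3+2h\xi+\frac{L^2}{\xi^3},\qquad \eta''=-2\eta^3+2h\eta+\frac{L^2}{\eta^3},$$ for positive functions $\xi,\eta$ subject to the constraints $$\xi'^2=\xi^4+2h\xi^2+2(c+1)-\frac{L^2}{\xi^2},\qquad \eta'^2=-\eta^4+2h\eta^2-2(c-1)-\frac{L^2}{\eta^2}$$ for some real constants $h,c$. Then there exist $h,c\in\mathbb R$ and a periodic solution $(\xi(\tau),\eta(\tau))$ of this system if and only if $L^2\le\big(\frac{16}{27}\big)^{3/2}$.
   Context: This is the separated form of the spatial Stark problem $\ddot x=-x/|q|^3$, $\ddot y=-y/|q|^3$, $\ddot z=-z/|q|^3+1$ in parabolic coordinates $x=\xi\eta\cos\phi$, $y=\xi\eta\sin\phi$, $z=\frac12(\xi^2-\eta^2)$, with $dt=(\xi^2+\eta^2)d\tau$, where $h$ is the energy $\frac12|\dot q|^2-\frac1{|q|}-z$, $L=x\dot y-y\dot x$ the $z$-component of angular momentum, and $c$ the separation constant. Constant solutions count as periodic. *)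

theory Defs
  imports "HOL-Analysis.Analysis"
begin

text \<open>A solution, defined for all real times tau, of the separated spatial Stark system
  in parabolic coordinates, with energy h, separation constant c and angular momentum L.\<close>
definition stark_sep_solution ::
  "real \<Rightarrow> real \<Rightarrow> real \<Rightarrow> (real \<Rightarrow> real) \<Rightarrow> (real \<Rightarrow> real) \<Rightarrow> bool" where
  "stark_sep_solution L h c \<xi> \<eta> \<longleftrightarrow>
     (\<forall>\<tau>. \<xi> \<tau> > 0 \<and> \<eta> \<tau> > 0) \<and>
     (\<exists>\<xi>1 \<eta>1. \<forall>\<tau>.
        (\<xi> has_real_derivative \<xi>1 \<tau>) (at \<tau>) \<and>
        (\<eta> has_real_derivative \<eta>1 \<tau>) (at \<tau>) \<and>
        (\<xi>1 has_real_derivative (2 * \<xi> \<tau> ^ 3 + 2 * h * \<xi> \<tau> + L\<^sup>2 / \<xi> \<tau> ^ 3)) (at \<tau>) \<and>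
        (\<eta>1 has_real_derivative (- 2 * \<eta> \<tau> ^ 3 + 2 * h * \<eta> \<tau> + L\<^sup>2 / \<eta> \<tau> ^ 3)) (at \<tau>) \<and>
        (\<xi>1 \<tau>)\<^sup>2 = \<xi> \<tau> ^ 4 + 2 * h * (\<xi> \<tau>)\<^sup>2 + 2 * (c + 1) - L\<^sup>2 / (\<xi> \<tau>)\<^sup>2 \<and>
        (\<eta>1 \<tau>)\<^sup>2 = - (\<eta> \<tau> ^ 4) + 2 * h * (\<eta> \<tau>)\<^sup>2 - 2 * (c - 1) - L\<^sup>2 / (\<eta> \<tau>)\<^sup>2)"

text \<open>Periodicity of the pair (constant solutions are periodic).\<close>
definition pair_periodic :: "(real \<Rightarrow> real) \<Rightarrow> (real \<Rightarrow> real) \<Rightarrow> bool" where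
  "pair_periodic \<xi> \<eta> \<longleftrightarrow> (\<exists>T>0. \<forall>\<tau>. \<xi> (\<tau> + T) = \<xi> \<tau> \<and> \<eta> (\<tau> + T) = \<eta> \<tau>)"

end

theory Submission
  imports Defs "HOL-Library.Periodic_Fun"
begin

(* A periodic xi attains its maximum, where xi' = 0 and xi'' <= 0; together with
   eta'^2 >= 0 at the same instant and with U = xi^2, v = eta^2, eliminating h and c
   leaves (U + v)^2 (U^2 v + L^2) <= 4 U^2 v.  AM-GM for U/2, U/2, v then bounds L^2 by
   the maximum of 4 s (4 - s^2) / 27 over s > 0, which is (16/27)^(3/2).
   Conversely, every smaller value L^2 = m (1 - m^4)^2 with 0 < m <= 1/sqrt 3 is realised
   by the equilibrium xi^2 = m (1 + m^2), eta^2 = m (1 - m^2). *)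

lemma periodic_continuous_attains_max:
  fixes f :: "real \<Rightarrow> real"
  assumes "continuous_on UNIV f" and "T > 0" and periodic: "\<And>t. f (t + T) = f t"
  shows "\<exists>t0. \<forall>t. f t \<le> f t0"
proof -
  interpret periodic_fun_simple f T
    by unfold_locales (rule periodic)
  have "continuous_on {0..T} f"
    using assms(1) continuous_on_subset by blast
  then obtain t0 where max: "\<forall>t\<in>{0..T}. f t \<le> f t0"
    using continuous_attains_sup[of "{0..T}" f] \<open>T > 0\<close> by auto
  have "f t \<le> f t0" for t
  proof -
    define n where "n = \<lfloor>t / T\<rfloor>"
    have "t - of_int n * T \<in> {0..T}"
      using floor_divide_lower[OF \<open>T > 0\<close>, of t] floor_divide_upper[OF \<open>T > 0\<close>, of t]
      by (simp add: n_def algebra_simps)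
    moreover have "f (t - of_int n * T) = f t"
      using plus_of_int[of "t - of_int n * T" n] by simp
    ultimately show ?thesis
      using max by metis
  qed
  then show ?thesis by blast
qed

lemma DERIV_local_max_second:
  fixes f f' :: "real \<Rightarrow> real"
  assumes f': "\<And>t. (f has_real_derivative f' t) (at t)"
    and f'': "(f' has_real_derivative D) (at x)"
    and "0 < d" and max: "\<And>y. \<bar>x - y\<bar> < d \<Longrightarrow> f y \<le> f x"
  shows "D \<le> 0"
proof (rule ccontr)
  assume "\<not> D \<le> 0"
  then obtain e where "e > 0" and inc: "\<And>k. 0 < k \<Longrightarrow> k < e \<Longrightarrow> f' x < f' (x + k)"
    using DERIV_pos_inc_right[OF f''] by force
  have "f' x = 0"
    using DERIV_local_max[OF f' \<open>0 < d\<close>] max by blast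
  define k where "k = min e d / 2"
  have k: "0 < k" "k < e" "k < d"
    using \<open>e > 0\<close> \<open>0 < d\<close> by (auto simp: k_def)
  obtain w where w: "x < w" "w < x + k" "f (x + k) - f x = k * f' w"
    using MVT2[of x "x + k" f f'] k f' by auto
  have "0 < f' w"
    using inc[of "w - x"] w k \<open>f' x = 0\<close> by auto
  then have "f x < f (x + k)"
    using w k by (simp add: algebra_simps)
  moreover have "f (x + k) \<le> f x"
    using max k by auto
  ultimately show False by simp
qed

lemma turning_point_inequality:
  fixes U v h c L2 :: real
  assumes "0 < U" "0 < v"
    and concave: "2 * U^3 + 2 * h * U^2 + L2 \<le> 0"
    and xi_root: "U^3 + 2 * h * U^2 + 2 * (c + 1) * U - L2 = 0"
    and eta_nonneg: "0 \<le> 2 * h * v^2 - v^3 - 2 * (c - 1) * v - L2"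
  shows "(U + v)^2 * (U^2 * v + L2) \<le> 4 * U^2 * v"
proof -
  \<comment> \<open>weighting the two constraints by \<open>U\<close> and \<open>v\<close> eliminates \<open>c\<close>,
    the concavity condition weighted by \<open>v (U + v)\<close> then eliminates \<open>h\<close>\<close>
  have "0 \<le> U * (2 * h * v^2 - v^3 - 2 * (c - 1) * v - L2)
              + v * (U^3 + 2 * h * U^2 + 2 * (c + 1) * U - L2)"
    using eta_nonneg xi_root \<open>0 < U\<close> by simp
  then have no_c: "L2 * (U + v) + U * v^3 - U^3 * v - 2 * h * U * v * (U + v) \<le> 4 * U * v"
    by (simp add: algebra_simps power2_eq_square power3_eq_cube)
  have "(2 * U^3 + L2) * (v * (U + v)) \<le> - 2 * h * U^2 * (v * (U + v))"
    using concave \<open>0 < U\<close> \<open>0 < v\<close> by (intro mult_right_mono) auto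
  moreover have "U * (L2 * (U + v) + U * v^3 - U^3 * v - 2 * h * U * v * (U + v)) \<le> U * (4 * U * v)"
    using no_c \<open>0 < U\<close> by (intro mult_left_mono) auto
  ultimately show ?thesis
    by (simp add: algebra_simps power2_eq_square power3_eq_cube)
qed

lemma amgm_three: "0 \<le> (U::real) \<Longrightarrow> 0 \<le> v \<Longrightarrow> 27 * (U^2 * v) \<le> 4 * (U + v)^3"
proof -
  assume "0 \<le> U" "0 \<le> v"
  have "4 * (U + v)^3 - 27 * (U^2 * v) = (U - 2 * v)^2 * (4 * U + v)"
    by (simp add: algebra_simps power2_eq_square power3_eq_cube)
  also have "\<dots> \<ge> 0"
    using \<open>0 \<le> U\<close> \<open>0 \<le> v\<close> by simp
  finally show ?thesis by simp
qed

lemma cubic_le_threshold: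
  fixes s :: real
  assumes "0 \<le> s"
  shows "4 * s * (4 - s^2) / 27 \<le> sqrt ((16/27)^3)"
proof (cases "s^2 \<le> 4")
  case True
  have "256 - 27 * s^2 * (4 - s^2)^2 = (3 * s^2 - 4)^2 * (16 - 3 * s^2)"
    by (simp add: algebra_simps power2_eq_square)
  also have "\<dots> \<ge> 0"
    using True by simp
  finally have "(4 * s * (4 - s^2) / 27)^2 \<le> (16/27)^3"
    by (simp add: power_mult_distrib power_divide)
  then show ?thesis
    by (rule real_le_rsqrt)
next
  case False
  then have "4 * s * (4 - s^2) / 27 \<le> 0"
    using assms by (simp add: mult_nonneg_nonpos)
  then show ?thesis
    by (rule order_trans[OF _ real_sqrt_ge_zero]) simp_all
qed

lemma turning_point_threshold:
  fixes U v L2 :: real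
  assumes "0 < U" "0 < v" and ineq: "(U + v)^2 * (U^2 * v + L2) \<le> 4 * U^2 * v"
  shows "L2 \<le> sqrt ((16/27)^3)"
proof -
  define s where "s = U + v"
  have "0 < s"
    using assms by (simp add: s_def)
  have L2_s: "L2 * s^2 \<le> U^2 * v * (4 - s^2)"
    using ineq by (simp add: s_def algebra_simps)
  show ?thesis
  proof (cases "s^2 \<le> 4")
    case True
    have "L2 * s^2 \<le> U^2 * v * (4 - s^2)"
      by (rule L2_s)
    also have "\<dots> \<le> (4 * s^3 / 27) * (4 - s^2)"
      using amgm_three[of U v] assms True by (intro mult_right_mono) (auto simp: s_def)
    also have "\<dots> = (4 * s * (4 - s^2) / 27) * s^2"
      by (simp add: power2_eq_square power3_eq_cube)
    finally have "L2 \<le> 4 * s * (4 - s^2) / 27"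
      using \<open>0 < s\<close> by (simp add: mult_le_cancel_right)
    also have "\<dots> \<le> sqrt ((16/27)^3)"
      using cubic_le_threshold \<open>0 < s\<close> by simp
    finally show ?thesis .
  next
    case False
    have "U^2 * v * (4 - s^2) \<le> 0"
      using False assms by (simp add: mult_nonneg_nonpos)
    then have "L2 * s^2 \<le> 0"
      using L2_s by linarith
    then have "L2 \<le> 0"
      using \<open>0 < s\<close> by (simp add: mult_le_0_iff)
    then show ?thesis
      by (rule order_trans[OF _ real_sqrt_ge_zero]) simp_all
  qed
qed

lemma stark_sep_solution_max_bound:
  assumes sol: "stark_sep_solution L h c \<xi> \<eta>" and max: "\<And>\<tau>. \<xi> \<tau> \<le> \<xi> t0"
  shows "L\<^sup>2 \<le> sqrt ((16/27)^3)"
proof -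
  obtain \<xi>1 \<eta>1 where pos: "0 < \<xi> t0" "0 < \<eta> t0"
    and \<xi>': "\<And>\<tau>. (\<xi> has_real_derivative \<xi>1 \<tau>) (at \<tau>)"
    and \<xi>'': "(\<xi>1 has_real_derivative
                (2 * \<xi> t0 ^ 3 + 2 * h * \<xi> t0 + L\<^sup>2 / \<xi> t0 ^ 3)) (at t0)"
    and \<xi>_constraint:
      "(\<xi>1 t0)\<^sup>2 = \<xi> t0 ^ 4 + 2 * h * (\<xi> t0)\<^sup>2 + 2 * (c + 1) - L\<^sup>2 / (\<xi> t0)\<^sup>2"
    and \<eta>_constraint:
      "(\<eta>1 t0)\<^sup>2 = - (\<eta> t0 ^ 4) + 2 * h * (\<eta> t0)\<^sup>2 - 2 * (c - 1) - L\<^sup>2 / (\<eta> t0)\<^sup>2"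
    using sol unfolding stark_sep_solution_def by blast
  define x y where "x = \<xi> t0" and "y = \<eta> t0"
  have "0 < x" "0 < y"
    using pos by (simp_all add: x_def y_def)
  have "\<xi>1 t0 = 0"
    using DERIV_local_max[OF \<xi>' zero_less_one] max by blast
  have "2 * x^3 + 2 * h * x + L\<^sup>2 / x^3 \<le> 0"
    using DERIV_local_max_second[OF \<xi>' \<xi>'' zero_less_one] max by (simp add: x_def)
  then have concave: "2 * (x^2)^3 + 2 * h * (x^2)^2 + L\<^sup>2 \<le> 0"
    using \<open>0 < x\<close> by (simp add: field_simps power_mult numeral_eq_Suc)
  have xi_root: "(x^2)^3 + 2 * h * (x^2)^2 + 2 * (c + 1) * x^2 - L\<^sup>2 = 0"
    using \<xi>_constraint \<open>\<xi>1 t0 = 0\<close> \<open>0 < x\<close> by (simp add: x_def field_simps)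
  have "0 \<le> y^2 * (\<eta>1 t0)\<^sup>2"
    by simp
  also have "\<dots> = 2 * h * (y^2)^2 - (y^2)^3 - 2 * (c - 1) * y^2 - L\<^sup>2"
    using \<eta>_constraint \<open>0 < y\<close> by (simp add: y_def field_simps)
  finally have eta_nonneg: "0 \<le> 2 * h * (y^2)^2 - (y^2)^3 - 2 * (c - 1) * y^2 - L\<^sup>2" .
  show ?thesis
    using \<open>0 < x\<close> \<open>0 < y\<close>
    by (intro turning_point_threshold[of "x^2" "y^2"]
        turning_point_inequality[OF _ _ concave xi_root eta_nonneg]) auto
qed

lemma stark_sep_solution_constant:
  fixes u v :: real
  assumes "0 < u" "0 < v"
    and \<xi>_force: "2 * u^3 + 2 * h * u^2 + L\<^sup>2 = 0"
    and \<xi>_constraint: "u^3 + 2 * h * u^2 + 2 * (c + 1) * u - L\<^sup>2 = 0"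
    and \<eta>_force: "2 * h * v^2 - 2 * v^3 + L\<^sup>2 = 0"
    and \<eta>_constraint: "2 * h * v^2 - v^3 - 2 * (c - 1) * v - L\<^sup>2 = 0"
  shows "stark_sep_solution L h c (\<lambda>_. sqrt u) (\<lambda>_. sqrt v)"
proof -
  define a b where "a = sqrt u" and "b = sqrt v"
  have "0 < a" "0 < b" and u: "u = a^2" and v: "v = b^2"
    using assms(1,2) by (simp_all add: a_def b_def)
  have "2 * a^3 + 2 * h * a + L\<^sup>2 / a^3 = 0"
    using \<xi>_force \<open>0 < a\<close> unfolding u
    by (simp add: field_simps power_mult[symmetric]) (simp add: eval_nat_numeral algebra_simps)
  moreover have "- 2 * b^3 + 2 * h * b + L\<^sup>2 / b^3 = 0"
    using \<eta>_force \<open>0 < b\<close> unfolding v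
    by (simp add: field_simps power_mult[symmetric]) (simp add: eval_nat_numeral algebra_simps)
  moreover have "0 = a^4 + 2 * h * a\<^sup>2 + 2 * (c + 1) - L\<^sup>2 / a\<^sup>2"
    using \<xi>_constraint \<open>0 < a\<close> unfolding u by (simp add: field_simps power_mult[symmetric])
  moreover have "0 = - (b^4) + 2 * h * b\<^sup>2 - 2 * (c - 1) - L\<^sup>2 / b\<^sup>2"
    using \<eta>_constraint \<open>0 < b\<close> unfolding v by (simp add: field_simps power_mult[symmetric])
  ultimately show ?thesis
    using \<open>0 < a\<close> \<open>0 < b\<close> unfolding stark_sep_solution_def a_def[symmetric] b_def[symmetric]
    by (intro conjI exI[of _ "\<lambda>_. 0"]) auto
qed

text \<open>Subtracting the two force equations gives \<open>2 u\<^sup>2 v\<^sup>2 = L\<^sup>2 (u - v)\<close>,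
  which \<open>u = m (1 + m\<^sup>2)\<close>, \<open>v = m (1 - m\<^sup>2)\<close> solve with
  \<open>L\<^sup>2 = m (1 - m\<^sup>4)\<^sup>2\<close>; then \<open>h\<close> is read off either force equation and
  \<open>c\<close> off the \<open>\<xi>\<close>-constraint.\<close>

lemma stark_equilibrium:
  fixes m L :: real
  assumes "0 < m" "m < 1" and L: "L\<^sup>2 = m * (1 - m^4)^2"
  shows "\<exists>h c. stark_sep_solution L h c (\<lambda>_. sqrt (m * (1 + m^2))) (\<lambda>_. sqrt (m * (1 - m^2)))"
proof -
  define u v where "u = m * (1 + m^2)" and "v = m * (1 - m^2)"
  define h c where "h = - (1 + 3 * m^4) / (2 * m)" and "c = m^2 * (3 * m^4 - 1) / 2"
  have "0 < u"
    using \<open>0 < m\<close> unfolding u_def by (intro mult_pos_pos add_pos_nonneg) auto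
  moreover have "0 < v"
    using assms(1,2) by (simp add: v_def power_less_one_iff)
  moreover have "2 * u^3 + 2 * h * u^2 + L\<^sup>2 = 0"
    using \<open>0 < m\<close> unfolding L u_def h_def by (simp add: field_simps) algebra
  moreover have "u^3 + 2 * h * u^2 + 2 * (c + 1) * u - L\<^sup>2 = 0"
    using \<open>0 < m\<close> unfolding L u_def h_def c_def by (simp add: field_simps) algebra
  moreover have "2 * h * v^2 - 2 * v^3 + L\<^sup>2 = 0"
    using \<open>0 < m\<close> unfolding L v_def h_def by (simp add: field_simps) algebra
  moreover have "2 * h * v^2 - v^3 - 2 * (c - 1) * v - L\<^sup>2 = 0"
    using \<open>0 < m\<close> unfolding L v_def h_def c_def by (simp add: field_simps) algebra
  ultimately show ?thesis
    unfolding u_def v_def by (blast intro: stark_sep_solution_constant)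
qed

lemma equilibrium_parameter_exists:
  fixes y :: real
  assumes "0 < y" "y \<le> sqrt ((16/27)^3)"
  shows "\<exists>m. 0 < m \<and> m < 1 \<and> m * (1 - m^4)^2 = y"
proof -
  define r :: real where "r = 1 / sqrt 3"
  have "0 < r" "r < 1" and r2: "r^2 = 1/3"
    by (simp_all add: r_def power_divide)
  have r4: "r^4 = 1/9"
    by (simp add: r_def power_divide power4_eq_xxxx)
  have "(r * (1 - r^4)^2)^2 = (16/27)^3"
    by (simp only: power_mult_distrib r2 r4) (simp add: eval_nat_numeral)
  then have "sqrt ((16/27)^3) = r * (1 - r^4)^2"
    using \<open>0 < r\<close> by (intro real_sqrt_unique) auto
  then obtain m where "0 \<le> m" "m \<le> r" and m_y: "m * (1 - m^4)^2 = y"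
    using IVT[of "\<lambda>m. m * (1 - m^4)^2" 0 y r] assms \<open>0 < r\<close>
    by (auto intro!: continuous_intros)
  moreover have "m \<noteq> 0"
    using \<open>0 < y\<close> m_y by auto
  ultimately have "0 < m" "m < 1"
    using \<open>r < 1\<close> by linarith+
  with m_y show ?thesis
    by blast
qed

lemma threshold_powr: "(16/27 :: real) powr (3/2) = sqrt ((16/27)^3)"
  by (simp add: powr_half_sqrt_powr)

theorem lemma5p3:
  fixes L :: real
  assumes "L \<noteq> 0"
  shows "(\<exists>h c \<xi> \<eta>. stark_sep_solution L h c \<xi> \<eta> \<and> pair_periodic \<xi> \<eta>)
         \<longleftrightarrow> L\<^sup>2 \<le> (16 / 27) powr (3 / 2)"
proof
  assume "\<exists>h c \<xi> \<eta>. stark_sep_solution L h c \<xi> \<eta> \<and> pair_periodic \<xi> \<eta>"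
  then obtain h c \<xi> \<eta> T where sol: "stark_sep_solution L h c \<xi> \<eta>"
    and "0 < T" and periodic: "\<And>\<tau>. \<xi> (\<tau> + T) = \<xi> \<tau>"
    unfolding pair_periodic_def by blast
  have "continuous_on UNIV \<xi>"
    using sol unfolding stark_sep_solution_def
    by (meson DERIV_isCont continuous_at_imp_continuous_on)
  then obtain t0 where "\<And>\<tau>. \<xi> \<tau> \<le> \<xi> t0"
    using periodic_continuous_attains_max \<open>0 < T\<close> periodic by blast
  with sol show "L\<^sup>2 \<le> (16 / 27) powr (3 / 2)"
    unfolding threshold_powr by (rule stark_sep_solution_max_bound)
next
  assume "L\<^sup>2 \<le> (16 / 27) powr (3 / 2)"
  then obtain m where "0 < m" "m < 1" "L\<^sup>2 = m * (1 - m^4)^2"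
    using equilibrium_parameter_exists[of "L\<^sup>2"] assms unfolding threshold_powr by auto
  then obtain h c
    where "stark_sep_solution L h c (\<lambda>_. sqrt (m * (1 + m^2))) (\<lambda>_. sqrt (m * (1 - m^2)))"
    using stark_equilibrium by blast
  moreover have "pair_periodic (\<lambda>_. a) (\<lambda>_. b)" for a b :: real
    unfolding pair_periodic_def by (intro exI[of _ 1]) simp
  ultimately show "\<exists>h c \<xi> \<eta>. stark_sep_solution L h c \<xi> \<eta> \<and> pair_periodic \<xi> \<eta>"
    by blast
qed

end
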